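(* Let $k$ be a positive integer, $p\ge 1$ and $0<\delta\le 1$. Let $(\Omega,\mathcal{F},\mathbb{P})$ be a probability space, $\Sigma$ a $k$-semiring on $\Omega$ with $\Sigma\subseteq\mathcal{F}$, $\mathcal{Q}$ a finite partition of $\Omega$ with $\mathcal{Q}\subseteq\Sigma$, and $f\in L_p(\Omega,\mathcal{F},\mathbb{P})$ with $\|f-\mathbb{E}(f\mid\mathcal{A}_{\mathcal{Q}})\|_{\Sigma}>\delta$. Then there exists a refinement $\mathcal{R}$ of $\mathcal{Q}$ with $\mathcal{R}\subseteq\Sigma$ and $|\mathcal{R}|\le|\mathcal{Q}|(k+1)$ such that $\|\mathbb{E}(f\mid\mathcal{A}_{\mathcal{R}})-\mathbb{E}(f\mid\mathcal{A}_{\mathcal{Q}})\|_{L_p}>\delta$.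
   Context: A collection $\Sigma$ of subsets of a nonempty set $\Omega$ is a $k$-semiring on $\Omega$ if: $\emptyset,\Omega\in\Sigma$; $S\cap T\in\Sigma$ for $S,T\in\Sigma$; for $S,T\in\Sigma$ there exist $\ell\in\{1,\dots,k\}$ and pairwise disjoint $R_1,\dots,R_\ell\in\Sigma$ with $S\setminus T=R_1\cup\dots\cup R_\ell$. The $\Sigma$-uniformity norm is $\|g\|_{\Sigma}=\sup\{|\int_S g\,d\mathbb{P}|:S\in\Sigma\}$. For a finite partition $\mathcal{Q}$, $\mathcal{A}_{\mathcal{Q}}$ is the $\sigma$-algebra generated by $\mathcal{Q}$; $\mathcal{Q}\subseteq\Sigma$ means every member of $\mathcal{Q}$ lies in $\Sigma$. *)

theory Defs
  imports "HOL-Probability.Probability"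
begin

definition k_semiring :: "nat \<Rightarrow> 'a set \<Rightarrow> 'a set set \<Rightarrow> bool" where
  "k_semiring k \<Omega> \<Sigma> \<longleftrightarrow>
     \<Omega> \<noteq> {} \<and> (\<forall>S\<in>\<Sigma>. S \<subseteq> \<Omega>) \<and> {} \<in> \<Sigma> \<and> \<Omega> \<in> \<Sigma> \<and>
     (\<forall>S\<in>\<Sigma>. \<forall>T\<in>\<Sigma>. S \<inter> T \<in> \<Sigma>) \<and>
     (\<forall>S\<in>\<Sigma>. \<forall>T\<in>\<Sigma>. \<exists>l R. 1 \<le> l \<and> l \<le> k \<and> (\<forall>i<l. R i \<in> \<Sigma>) \<and>
        (\<forall>i<l. \<forall>j<l. i \<noteq> j \<longrightarrow> R i \<inter> R j = {}) \<and>
        S - T = (\<Union>i<l. R i))"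

definition finite_partition :: "'a set \<Rightarrow> 'a set set \<Rightarrow> bool" where
  "finite_partition \<Omega> Q \<longleftrightarrow> finite Q \<and> (\<forall>A\<in>Q. A \<noteq> {}) \<and> disjoint Q \<and> \<Union>Q = \<Omega>"

definition refines :: "'a set set \<Rightarrow> 'a set set \<Rightarrow> bool" where
  "refines R Q \<longleftrightarrow> (\<forall>B\<in>R. \<exists>A\<in>Q. B \<subseteq> A)"

definition part_alg :: "'a measure \<Rightarrow> 'a set set \<Rightarrow> 'a measure" where
  "part_alg M Q = sigma (space M) Q"

definition cond_exp_part :: "'a measure \<Rightarrow> 'a set set \<Rightarrow> ('a \<Rightarrow> real) \<Rightarrow> 'a \<Rightarrow> real" where
  "cond_exp_part M Q f = real_cond_exp M (part_alg M Q) f"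

definition Lp_norm :: "'a measure \<Rightarrow> real \<Rightarrow> ('a \<Rightarrow> real) \<Rightarrow> real" where
  "Lp_norm M p g = (\<integral>x. \<bar>g x\<bar> powr p \<partial>M) powr (1 / p)"

definition in_Lp :: "'a measure \<Rightarrow> real \<Rightarrow> ('a \<Rightarrow> real) \<Rightarrow> bool" where
  "in_Lp M p f \<longleftrightarrow> f \<in> borel_measurable M \<and> integrable M (\<lambda>x. \<bar>f x\<bar> powr p)"

definition unif_norm :: "'a measure \<Rightarrow> 'a set set \<Rightarrow> ('a \<Rightarrow> real) \<Rightarrow> real" where
  "unif_norm M \<Sigma> g = Sup {\<bar>LINT x:S|M. g x\<bar> | S. S \<in> \<Sigma>}"

end

theory Submission
  imports Defs
begin

(* Pick S in \<Sigma> witnessing \<bar>\<integral>\<^sub>S (f - E(f|Q))\<bar> > \<delta>, and split every cell A of Q into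
   A \<inter> S and the at most k pieces of A - S provided by the k-semiring axiom. In the resulting
   partition R the set S is a union of cells, so \<integral>\<^sub>S E(f|R) = \<integral>\<^sub>S f, and therefore
   \<delta> < \<bar>\<integral>\<^sub>S (E(f|R) - E(f|Q))\<bar> \<le> \<parallel>E(f|R) - E(f|Q)\<parallel>\<^sub>1 \<le> \<parallel>E(f|R) - E(f|Q)\<parallel>\<^sub>p,
   the last step being Jensen's inequality on the probability space. *)

lemma convex_on_powr_nonneg:
  fixes p :: real assumes "p \<ge> 1"
  shows "convex_on {0..} (\<lambda>x. x powr p)"
proof (rule convex_onI)
  fix t a b :: real assume t: "0 < t" "t < 1" and ab: "a \<in> {0..}" "b \<in> {0..}"
  show "((1 - t) *\<^sub>R a + t *\<^sub>R b) powr p \<le> (1 - t) * a powr p + t * b powr p"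
  proof (cases "a = 0 \<or> b = 0")
    case False
    then have "a \<in> {0<..}" "b \<in> {0<..}" using ab by auto
    from convex_onD[OF powr_convex[OF assms] _ _ this] t show ?thesis by simp
  next
    case True
    have "t powr p \<le> t" "(1 - t) powr p \<le> 1 - t"
      using powr_mono'[of 1 p t] powr_mono'[of 1 p "1 - t"] assms t by simp_all
    with True ab t show ?thesis by (auto simp: powr_mult mult_right_mono)
  qed
qed simp

lemma convex_on_abs_powr:
  fixes p :: real assumes "p \<ge> 1"
  shows "convex_on UNIV (\<lambda>x::real. \<bar>x\<bar> powr p)"
proof (rule convex_onI)
  fix t x y :: real assume t: "0 < t" "t < 1"
  have "\<bar>(1 - t) *\<^sub>R x + t *\<^sub>R y\<bar> powr p \<le> ((1 - t) * \<bar>x\<bar> + t * \<bar>y\<bar>) powr p"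
    using t assms by (intro powr_mono2) (auto intro: abs_triangle_ineq[THEN order_trans] simp: abs_mult)
  also have "\<dots> \<le> (1 - t) * \<bar>x\<bar> powr p + t * \<bar>y\<bar> powr p"
    using convex_onD[OF convex_on_powr_nonneg[OF assms], of t "\<bar>x\<bar>" "\<bar>y\<bar>"] t by simp
  finally show "\<bar>(1 - t) *\<^sub>R x + t *\<^sub>R y\<bar> powr p \<le> (1 - t) * \<bar>x\<bar> powr p + t * \<bar>y\<bar> powr p" .
qed simp

lemma abs_diff_powr_le:
  fixes a b p :: real assumes "p \<ge> 0"
  shows "\<bar>a - b\<bar> powr p \<le> 2 powr p * (\<bar>a\<bar> powr p + \<bar>b\<bar> powr p)"
proof -
  have "\<bar>a - b\<bar> powr p \<le> (2 * max \<bar>a\<bar> \<bar>b\<bar>) powr p"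
    using assms by (intro powr_mono2) auto
  also have "\<dots> = 2 powr p * max \<bar>a\<bar> \<bar>b\<bar> powr p" by (simp add: powr_mult)
  also have "\<dots> \<le> 2 powr p * (\<bar>a\<bar> powr p + \<bar>b\<bar> powr p)"
    by (intro mult_left_mono) (auto simp: max_def)
  finally show ?thesis .
qed

lemma in_Lp_diff:
  assumes "p \<ge> 0" "in_Lp M p f" "in_Lp M p g"
  shows "in_Lp M p (\<lambda>x. f x - g x)"
  unfolding in_Lp_def
proof
  have [measurable]: "f \<in> borel_measurable M" "g \<in> borel_measurable M"
    using assms(2,3) by (simp_all add: in_Lp_def)
  show "(\<lambda>x. f x - g x) \<in> borel_measurable M" by measurable
  show "integrable M (\<lambda>x. \<bar>f x - g x\<bar> powr p)"
  proof (rule Bochner_Integration.integrable_bound)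
    show "integrable M (\<lambda>x. 2 powr p * (\<bar>f x\<bar> powr p + \<bar>g x\<bar> powr p))"
      using assms(2,3) by (auto simp: in_Lp_def)
    show "AE x in M. norm (\<bar>f x - g x\<bar> powr p) \<le> norm (2 powr p * (\<bar>f x\<bar> powr p + \<bar>g x\<bar> powr p))"
      using abs_diff_powr_le[OF assms(1)] by simp
  qed measurable
qed

lemma in_Lp_integrable:
  assumes "finite_measure M" "p \<ge> 1" "in_Lp M p f"
  shows "integrable M f"
proof (rule Bochner_Integration.integrable_bound)
  show "integrable M (\<lambda>x. 1 + \<bar>f x\<bar> powr p)"
    using assms(1,3) by (simp add: in_Lp_def finite_measure.integrable_const)
  show "f \<in> borel_measurable M" using assms(3) by (simp add: in_Lp_def)
  have "\<bar>f x\<bar> \<le> 1 + \<bar>f x\<bar> powr p" for x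
  proof (cases "\<bar>f x\<bar> \<le> 1")
    case False
    then have "\<bar>f x\<bar> powr 1 \<le> \<bar>f x\<bar> powr p" using assms(2) by (intro powr_mono) auto
    with False show ?thesis by simp
  qed (simp add: add_increasing2)
  then show "AE x in M. norm (f x) \<le> norm (1 + \<bar>f x\<bar> powr p)" by simp
qed

lemma in_Lp_real_cond_exp:
  assumes "sigma_finite_subalgebra M F" "finite_measure M" "p \<ge> 1" "in_Lp M p f"
  shows "in_Lp M p (real_cond_exp M F f)"
  unfolding in_Lp_def
proof
  show "real_cond_exp M F f \<in> borel_measurable M"
    by (rule borel_measurable_cond_exp2)
  have "(\<lambda>x::real. \<bar>x\<bar> powr p) \<in> borel_measurable borel" by measurable
  then show "integrable M (\<lambda>x. \<bar>real_cond_exp M F f x\<bar> powr p)"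
    using assms in_Lp_integrable
    by (intro sigma_finite_subalgebra.integrable_convex_cond_exp[where I = UNIV, OF assms(1)]
        convex_on_abs_powr) (auto simp: in_Lp_def)
qed

lemma (in prob_space) integral_abs_le_Lp_norm:
  assumes "p \<ge> 1" "in_Lp M p g"
  shows "(\<integral>x. \<bar>g x\<bar> \<partial>M) \<le> Lp_norm M p g"
proof -
  have "integrable M g"
    using in_Lp_integrable[OF finite_measure_axioms assms] .
  then have "\<bar>\<integral>x. \<bar>g x\<bar> \<partial>M\<bar> powr p \<le> (\<integral>x. \<bar>\<bar>g x\<bar>\<bar> powr p \<partial>M)"
    using assms(2) unfolding in_Lp_def
    by (intro jensens_inequality[where I = UNIV] convex_on_abs_powr[OF assms(1)]) auto
  then have "(\<bar>\<integral>x. \<bar>g x\<bar> \<partial>M\<bar> powr p) powr (1 / p) \<le> (\<integral>x. \<bar>g x\<bar> powr p \<partial>M) powr (1 / p)"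
    using assms(1) by (intro powr_mono2) auto
  then show ?thesis
    using assms(1) by (simp add: Lp_norm_def powr_powr)
qed

lemma abs_set_integral_le_integral_abs:
  fixes g :: "'a \<Rightarrow> real"
  assumes "integrable M g" "S \<in> sets M"
  shows "\<bar>LINT x:S|M. g x\<bar> \<le> (\<integral>x. \<bar>g x\<bar> \<partial>M)"
proof -
  have "set_integrable M S g"
    unfolding set_integrable_def by (intro integrable_mult_indicator assms)
  then have "\<bar>LINT x:S|M. g x\<bar> \<le> (LINT x:S|M. \<bar>g x\<bar>)"
    using set_integral_norm_bound by fastforce
  also have "\<dots> \<le> (\<integral>x. \<bar>g x\<bar> \<partial>M)"
    unfolding set_lebesgue_integral_def using assms
    by (intro integral_mono integrable_mult_indicator integrable_abs) (auto simp: indicator_def)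
  finally show ?thesis .
qed

lemma sigma_finite_subalgebra_part_alg:
  assumes "finite_measure M" "Q \<subseteq> sets M"
  shows "sigma_finite_subalgebra M (part_alg M Q)"
proof (intro finite_measure_subalgebra_is_sigma_finite finite_measure_subalgebra.intro assms(1)
    finite_measure_subalgebra_axioms.intro)
  have "Q \<subseteq> Pow (space M)" using assms(2) sets.sets_into_space by auto
  then show "subalgebra M (part_alg M Q)"
    using sets.sigma_sets_subset[OF assms(2)] unfolding subalgebra_def part_alg_def by simp
qed

lemma Union_in_sets_part_alg:
  assumes "Q \<subseteq> Pow (space M)" "finite Q'" "Q' \<subseteq> Q"
  shows "\<Union>Q' \<in> sets (part_alg M Q)"
  using assms unfolding part_alg_def by (intro sets.finite_Union) auto

lemma set_integral_real_cond_exp_diff: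
  assumes "sigma_finite_subalgebra M F" "integrable M f" "integrable M h" "S \<in> sets F"
  shows "(LINT x:S|M. real_cond_exp M F f x - h x) = (LINT x:S|M. f x - h x)"
proof -
  have "S \<in> sets M"
    using assms(1,4) by (auto simp: sigma_finite_subalgebra_def subalgebra_def)
  then have si: "set_integrable M S u" if "integrable M u" for u :: "'a \<Rightarrow> real"
    unfolding set_integrable_def using that by (rule integrable_mult_indicator)
  have "integrable M (real_cond_exp M F f)"
    using assms(1,2) by (rule sigma_finite_subalgebra.real_cond_exp_int(1))
  then show ?thesis
    using assms si sigma_finite_subalgebra.real_cond_exp_intA[OF assms(1,2,4)]
    by (simp add: set_integral_diff(2))
qed

lemma less_unif_norm_obtains:
  assumes "integrable M g" "\<Sigma> \<subseteq> sets M" "\<Sigma> \<noteq> {}" "\<delta> < unif_norm M \<Sigma> g"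
  obtains S where "S \<in> \<Sigma>" "\<delta> < \<bar>LINT x:S|M. g x\<bar>"
proof -
  let ?V = "{\<bar>LINT x:S|M. g x\<bar> | S. S \<in> \<Sigma>}"
  have bdd: "bdd_above ?V"
  proof (rule bdd_aboveI)
    fix y assume "y \<in> ?V"
    with assms(1,2) show "y \<le> (\<integral>x. \<bar>g x\<bar> \<partial>M)"
      using abs_set_integral_le_integral_abs by blast
  qed
  have "?V \<noteq> {}" using assms(3) by blast
  then have "\<exists>y\<in>?V. \<delta> < y"
    using assms(4) less_cSup_iff[OF _ bdd] unfolding unif_norm_def by blast
  then show ?thesis using that by blast
qed

lemma k_semiring_diff_obtains:
  assumes "k_semiring k \<Omega> \<Sigma>" "S \<in> \<Sigma>" "T \<in> \<Sigma>"
  obtains D where "D \<subseteq> \<Sigma>" "finite D" "card D \<le> k" "disjoint D" "\<Union>D = S - T"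
proof -
  have "\<exists>l R. 1 \<le> l \<and> l \<le> k \<and> (\<forall>i<l. R i \<in> \<Sigma>) \<and>
      (\<forall>i<l. \<forall>j<l. i \<noteq> j \<longrightarrow> R i \<inter> R j = {}) \<and> S - T = (\<Union>i<l. R i)"
    using assms unfolding k_semiring_def by simp
  then obtain l R where l: "l \<le> k" and R: "\<forall>i<l. R i \<in> \<Sigma>"
    and disj: "\<forall>i<l. \<forall>j<l. i \<noteq> j \<longrightarrow> R i \<inter> R j = {}" and U: "S - T = (\<Union>i<l. R i)"
    by (elim exE conjE)
  have "card (R ` {..<l}) \<le> k" using card_image_le[of "{..<l}" R] l by simp
  moreover have "disjoint (R ` {..<l})" using disj by (auto intro!: disjointI)
  moreover have "R ` {..<l} \<subseteq> \<Sigma>" using R by blast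
  ultimately show ?thesis using that U by simp
qed

definition refine_partition :: "'a set set \<Rightarrow> 'a set \<Rightarrow> ('a set \<Rightarrow> 'a set set) \<Rightarrow> 'a set set" where
  "refine_partition Q S D = ((\<lambda>A. A \<inter> S) ` Q \<union> (\<Union>A\<in>Q. D A)) - {{}}"

context
  fixes \<Omega> S :: "'a set" and Q :: "'a set set" and D :: "'a set \<Rightarrow> 'a set set"
  assumes Q: "finite_partition \<Omega> Q"
    and D: "\<And>A. A \<in> Q \<Longrightarrow> disjoint (D A) \<and> \<Union>(D A) = A - S"
begin

lemma refine_partition_cases:
  assumes "X \<in> refine_partition Q S D"
  obtains A where "A \<in> Q" "X = A \<inter> S" | A where "A \<in> Q" "X \<in> D A" "X \<subseteq> A - S"
proof -
  have "X \<in> (\<lambda>A. A \<inter> S) ` Q \<or> X \<in> (\<Union>A\<in>Q. D A)"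
    using assms unfolding refine_partition_def by simp
  then show ?thesis
  proof (elim disjE imageE UN_E)
    fix A assume "A \<in> Q" "X \<in> D A"
    then show ?thesis using that(2) D[of A] by blast
  qed (use that(1) in blast)
qed

lemma refines_refine_partition: "refines (refine_partition Q S D) Q"
  unfolding refines_def
proof
  fix X assume "X \<in> refine_partition Q S D"
  then show "\<exists>A\<in>Q. X \<subseteq> A" by (cases rule: refine_partition_cases) auto
qed

lemma Union_refine_partition: "\<Union>(refine_partition Q S D) = \<Omega>"
proof
  show "\<Union>(refine_partition Q S D) \<subseteq> \<Omega>"
    using refines_refine_partition Q unfolding refines_def finite_partition_def by blast
  show "\<Omega> \<subseteq> \<Union>(refine_partition Q S D)"
  proof
    fix x assume "x \<in> \<Omega>"
    then obtain A where A: "A \<in> Q" "x \<in> A" using Q unfolding finite_partition_def by blast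
    then have "x \<in> A \<inter> S \<or> (\<exists>X\<in>D A. x \<in> X)" using D by blast
    with A show "x \<in> \<Union>(refine_partition Q S D)" unfolding refine_partition_def by blast
  qed
qed

lemma disjoint_refine_partition: "disjoint (refine_partition Q S D)"
proof (rule disjointI)
  fix X Y assume XY: "X \<in> refine_partition Q S D" "Y \<in> refine_partition Q S D" "X \<noteq> Y"
  have disjQ: "A = B" if "A \<in> Q" "B \<in> Q" "x \<in> A" "x \<in> B" for A B x
    using Q that unfolding finite_partition_def by (auto dest: disjointD)
  from XY(1) show "X \<inter> Y = {}"
  proof (cases rule: refine_partition_cases)
    case (1 A)
    from XY(2) show ?thesis
    proof (cases rule: refine_partition_cases)
      case (1 B)
      then show ?thesis using \<open>X = A \<inter> S\<close> \<open>A \<in> Q\<close> XY(3) disjQ by blast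
    next
      case (2 B)
      then show ?thesis using \<open>X = A \<inter> S\<close> by blast
    qed
  next
    case (2 A)
    from XY(2) show ?thesis
    proof (cases rule: refine_partition_cases)
      case (1 B)
      then show ?thesis using \<open>X \<subseteq> A - S\<close> by blast
    next
      case (2 B)
      show ?thesis
      proof (cases "A = B")
        case True
        then show ?thesis using 2 \<open>A \<in> Q\<close> \<open>X \<in> D A\<close> XY(3) D by (auto dest: disjointD)
      next
        case False
        then show ?thesis using 2 \<open>A \<in> Q\<close> \<open>X \<subseteq> A - S\<close> disjQ by blast
      qed
    qed
  qed
qed

lemma finite_partition_refine_partition:
  assumes "\<And>A. A \<in> Q \<Longrightarrow> finite (D A)"
  shows "finite_partition \<Omega> (refine_partition Q S D)"
proof -
  have "finite Q" using Q by (simp add: finite_partition_def)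
  then have "finite (refine_partition Q S D)"
    using assms unfolding refine_partition_def by blast
  then show ?thesis
    using disjoint_refine_partition Union_refine_partition
    unfolding finite_partition_def refine_partition_def by blast
qed

lemma card_refine_partition_le:
  assumes "\<And>A. A \<in> Q \<Longrightarrow> finite (D A) \<and> card (D A) \<le> k"
  shows "card (refine_partition Q S D) \<le> card Q * (k + 1)"
proof -
  have fin: "finite Q" using Q by (simp add: finite_partition_def)
  have "card (refine_partition Q S D) \<le> card ((\<lambda>A. A \<inter> S) ` Q \<union> (\<Union>A\<in>Q. D A))"
    unfolding refine_partition_def using fin assms by (intro card_mono) auto
  also have "\<dots> \<le> card ((\<lambda>A. A \<inter> S) ` Q) + card (\<Union>A\<in>Q. D A)"
    by (rule card_Un_le)
  also have "\<dots> \<le> card Q + (\<Sum>A\<in>Q. card (D A))"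
    by (intro add_mono card_image_le card_UN_le fin)
  also have "\<dots> \<le> card Q + (\<Sum>A\<in>Q. k)"
    using assms by (intro add_mono sum_mono) auto
  finally show ?thesis by simp
qed

lemma Union_refine_partition_within:
  assumes "S \<subseteq> \<Omega>"
  shows "\<Union>{X \<in> refine_partition Q S D. X \<subseteq> S} = S"
proof
  show "S \<subseteq> \<Union>{X \<in> refine_partition Q S D. X \<subseteq> S}"
  proof
    fix x assume "x \<in> S"
    then obtain A where "A \<in> Q" "x \<in> A" using assms Q unfolding finite_partition_def by blast
    with \<open>x \<in> S\<close> show "x \<in> \<Union>{X \<in> refine_partition Q S D. X \<subseteq> S}"
      unfolding refine_partition_def by blast
  qed
qed blast

end

lemma k_semiring_refine_partition_obtains:
  assumes \<Sigma>: "k_semiring k \<Omega> \<Sigma>" and Q: "finite_partition \<Omega> Q" "Q \<subseteq> \<Sigma>" and S: "S \<in> \<Sigma>"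
  obtains R where "finite_partition \<Omega> R" "refines R Q" "R \<subseteq> \<Sigma>" "card R \<le> card Q * (k + 1)"
    "\<Union>{X \<in> R. X \<subseteq> S} = S"
proof -
  have "\<forall>A\<in>Q. \<exists>D. D \<subseteq> \<Sigma> \<and> finite D \<and> card D \<le> k \<and> disjoint D \<and> \<Union>D = A - S"
  proof
    fix A assume "A \<in> Q"
    then have "A \<in> \<Sigma>" using Q(2) by blast
    then obtain D where "D \<subseteq> \<Sigma>" "finite D" "card D \<le> k" "disjoint D" "\<Union>D = A - S"
      using k_semiring_diff_obtains[OF \<Sigma> _ S] by blast
    then show "\<exists>D. D \<subseteq> \<Sigma> \<and> finite D \<and> card D \<le> k \<and> disjoint D \<and> \<Union>D = A - S"
      by blast
  qed
  from bchoice[OF this] obtain D where D: "\<forall>A\<in>Q.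
      D A \<subseteq> \<Sigma> \<and> finite (D A) \<and> card (D A) \<le> k \<and> disjoint (D A) \<and> \<Union>(D A) = A - S" ..
  then have D_part: "\<And>A. A \<in> Q \<Longrightarrow> disjoint (D A) \<and> \<Union>(D A) = A - S"
    and D_card: "\<And>A. A \<in> Q \<Longrightarrow> finite (D A) \<and> card (D A) \<le> k" by simp_all
  show ?thesis
  proof (rule that)
    show "finite_partition \<Omega> (refine_partition Q S D)"
      using finite_partition_refine_partition[where D = D and S = S, OF Q(1) D_part] D_card by blast
    show "refines (refine_partition Q S D) Q"
      by (rule refines_refine_partition[where D = D and S = S, OF Q(1) D_part])
    show "card (refine_partition Q S D) \<le> card Q * (k + 1)"
      using card_refine_partition_le[where D = D and S = S, OF Q(1) D_part] D_card by blast
    show "\<Union>{X \<in> refine_partition Q S D. X \<subseteq> S} = S"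
      using \<Sigma> S by (intro Union_refine_partition_within[where D = D and S = S, OF Q(1) D_part])
        (auto simp: k_semiring_def)
    have Int_S: "A \<inter> S \<in> \<Sigma>" if "A \<in> Q" for A
      using \<Sigma> Q(2) S that unfolding k_semiring_def by (simp add: subset_iff)
    show "refine_partition Q S D \<subseteq> \<Sigma>"
      using D Int_S unfolding refine_partition_def by blast
  qed
qed

lemma in_Lp_cond_exp_part:
  assumes "finite_measure M" "Q \<subseteq> sets M" "p \<ge> 1" "in_Lp M p f"
  shows "in_Lp M p (cond_exp_part M Q f)"
  unfolding cond_exp_part_def
  using assms by (intro in_Lp_real_cond_exp sigma_finite_subalgebra_part_alg)

lemma (in prob_space) abs_set_integral_le_Lp_norm_cond_exp_part_diff:
  assumes "p \<ge> 1" "in_Lp M p f" "Q \<subseteq> sets M" "R \<subseteq> sets M" "S \<in> sets (part_alg M R)"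
  shows "\<bar>LINT x:S|M. f x - cond_exp_part M Q f x\<bar>
    \<le> Lp_norm M p (\<lambda>x. cond_exp_part M R f x - cond_exp_part M Q f x)"
proof -
  let ?g = "\<lambda>x. cond_exp_part M R f x - cond_exp_part M Q f x"
  have sub_R: "sigma_finite_subalgebra M (part_alg M R)"
    using assms(4) by (intro sigma_finite_subalgebra_part_alg finite_measure_axioms)
  then have "S \<in> sets M"
    using assms(5) by (auto simp: sigma_finite_subalgebra_def subalgebra_def)
  have Lp: "in_Lp M p (cond_exp_part M Q f)" "in_Lp M p (cond_exp_part M R f)"
    using assms(1-4) by (simp_all add: in_Lp_cond_exp_part finite_measure_axioms)
  then have g_Lp: "in_Lp M p ?g"
    using assms(1) by (intro in_Lp_diff) auto
  have "(LINT x:S|M. f x - cond_exp_part M Q f x) = (LINT x:S|M. ?g x)"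
    unfolding cond_exp_part_def[of M R]
    using assms(1,2,5) Lp(1) in_Lp_integrable[OF finite_measure_axioms]
    by (intro set_integral_real_cond_exp_diff[OF sub_R, symmetric]) auto
  also have "\<bar>\<dots>\<bar> \<le> (\<integral>x. \<bar>?g x\<bar> \<partial>M)"
    using g_Lp assms(1) \<open>S \<in> sets M\<close>
    by (intro abs_set_integral_le_integral_abs in_Lp_integrable[OF finite_measure_axioms])
  also have "\<dots> \<le> Lp_norm M p ?g"
    using assms(1) g_Lp by (rule integral_abs_le_Lp_norm)
  finally show ?thesis .
qed

theorem lemma3p3:
  fixes M :: "'a measure" and \<Sigma> Q :: "'a set set" and f :: "'a \<Rightarrow> real"
    and k :: nat and p \<delta> :: real
  assumes "k \<ge> 1" and "p \<ge> 1" and "0 < \<delta>" and "\<delta> \<le> 1"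
    and "prob_space M"
    and "k_semiring k (space M) \<Sigma>" and "\<Sigma> \<subseteq> sets M"
    and "finite_partition (space M) Q" and "Q \<subseteq> \<Sigma>"
    and "in_Lp M p f"
    and "unif_norm M \<Sigma> (\<lambda>x. f x - cond_exp_part M Q f x) > \<delta>"
  shows "\<exists>R. finite_partition (space M) R \<and> refines R Q \<and> R \<subseteq> \<Sigma> \<and>
             card R \<le> card Q * (k + 1) \<and>
             Lp_norm M p (\<lambda>x. cond_exp_part M R f x - cond_exp_part M Q f x) > \<delta>"
proof -
  interpret prob_space M by fact
  have Q_sets: "Q \<subseteq> sets M" using assms(7,9) by blast
  have "in_Lp M p (\<lambda>x. f x - cond_exp_part M Q f x)"
    using assms(2,10) in_Lp_cond_exp_part[OF finite_measure_axioms Q_sets] by (intro in_Lp_diff) auto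
  with assms(2) have "integrable M (\<lambda>x. f x - cond_exp_part M Q f x)"
    by (rule in_Lp_integrable[OF finite_measure_axioms])
  moreover have "\<Sigma> \<noteq> {}" using assms(6) by (auto simp: k_semiring_def)
  ultimately obtain S where S: "S \<in> \<Sigma>"
    and S_big: "\<delta> < \<bar>LINT x:S|M. f x - cond_exp_part M Q f x\<bar>"
    using less_unif_norm_obtains assms(7,11) by blast
  obtain R where R: "finite_partition (space M) R" "refines R Q" "R \<subseteq> \<Sigma>"
      "card R \<le> card Q * (k + 1)" and S_union: "\<Union>{X \<in> R. X \<subseteq> S} = S"
    using k_semiring_refine_partition_obtains[OF assms(6,8,9) S] by blast
  have "R \<subseteq> Pow (space M)" "finite R" using R(1) unfolding finite_partition_def by blast+
  then have "S \<in> sets (part_alg M R)"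
    using Union_in_sets_part_alg[of R M "{X \<in> R. X \<subseteq> S}"] unfolding S_union by simp
  moreover have "R \<subseteq> sets M" using R(3) assms(7) by blast
  ultimately have "\<delta> < Lp_norm M p (\<lambda>x. cond_exp_part M R f x - cond_exp_part M Q f x)"
    using S_big abs_set_integral_le_Lp_norm_cond_exp_part_diff[OF assms(2,10) Q_sets]
    by (meson order_less_le_trans)
  with R show ?thesis by blast
qed

end
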